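(* Consider Model A with $\delta>-1$. There exists a constant $C'>0$ (depending only on $\delta$) such that $$\bigl|\mathbf E(N_{>k}(n))-np_{>k}\bigr|\le C'\qquad\text{for all } n\ge1,\ k\ge1.$$
   Context: Model A (with $\delta>-1$): $G(1)$ consists of a single node $v_1$ with a self loop (so $v_1$ has degree 2; a self loop contributes 2 to the degree). For $n\ge1$, given $G(n)$ (nodes $v_1,\dots,v_n$, $n$ edges), $G(n+1)$ is obtained by adding a new node $v_{n+1}$ and one edge joining $v_{n+1}$ to an existing node $v_i$, $1\le i\le n$, chosen with probability $\frac{D_i(n)+\delta}{(2+\delta)n}$, where $D_i(n)$ is the degree of $v_i$ in $G(n)$. $N_{>k}(n):=\#\{1\le i\le n: D_i(n)>k\}$ for $k\ge1$, $N_{>0}(n):=n$. For $k\ge0$, $$p_{>k}:=\frac{\Gamma(k+1+\delta)\,\Gamma(3+2\delta)}{\Gamma(k+3+2\delta)\,\Gamma(1+\delta)}.$$ *)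

theory Defs
  imports "HOL-Analysis.Analysis" "HOL-Probability.Probability"
begin

text \<open>Model A preferential attachment, tracked through its degree sequence.
  A state is the list ds of degrees, ds ! (i-1) = D_i(n), of length n (the number of nodes).\<close>

definition modelA_step :: "real \<Rightarrow> nat list \<Rightarrow> nat list pmf" where
  "modelA_step \<delta> ds =
     pmf_of_list
       (map (\<lambda>i. (ds[i := ds ! i + 1] @ [1],
                  (real (ds ! i) + \<delta>) / ((2 + \<delta>) * real (length ds))))
            [0..<length ds])"

text \<open>modelA_aux delta m is the degree sequence of G(m+1); G(1) is one node with a self loop (degree 2).\<close>
primrec modelA_aux :: "real \<Rightarrow> nat \<Rightarrow> nat list pmf" where
  "modelA_aux \<delta> 0 = return_pmf [2]"
| "modelA_aux \<delta> (Suc m) = modelA_aux \<delta> m \<bind> modelA_step \<delta>"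

definition modelA :: "real \<Rightarrow> nat \<Rightarrow> nat list pmf" where
  "modelA \<delta> n = modelA_aux \<delta> (n - 1)"

definition N_gt :: "nat \<Rightarrow> nat list \<Rightarrow> nat" where
  "N_gt k ds = card {i. i < length ds \<and> ds ! i > k}"

definition p_gt :: "real \<Rightarrow> nat \<Rightarrow> real" where
  "p_gt \<delta> k = Gamma (real k + 1 + \<delta>) * Gamma (3 + 2 * \<delta>)
              / (Gamma (real k + 3 + 2 * \<delta>) * Gamma (1 + \<delta>))"

end

theory Submission
  imports Defs
begin

text \<open>Write a_k(n) = E N_{>k}(n) and c_k(n) = (k + delta) / ((2 + delta) n). Given G(n), the count
  N_{>k} grows by one exactly when the new node attaches to a node of degree k, which happens with
  probability c_k(n) (N_{>k-1}(n) - N_{>k}(n)); hence a_k(n+1) = (1 - c_k(n)) a_k(n) + c_k(n) a_{k-1}(n).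
  Since (2 + delta) p_{>k} = (k + delta) (p_{>k-1} - p_{>k}), the sequence n p_{>k} solves the same
  recursion exactly, so while c_k(n) <= 1 the errors a_k(n) - n p_{>k} at time n+1 are convex
  combinations of errors at time n. They vanish for k = 0 and are at most 1 for n = 1. If c_k(n) > 1,
  then k exceeds the maximal degree n + 1, so a_k(n+1) = 0, while (n+1) p_{>k} <= 2 by the tail bound
  (k + 1 + delta) p_{>k} <= 1 + delta. By induction on n every error is at most 2.\<close>

lemma expectation_pmf_of_list:
  fixes f :: "'a \<Rightarrow> real"
  assumes "pmf_of_list_wf xs"
  shows "measure_pmf.expectation (pmf_of_list xs) f = (\<Sum>(x, p)\<leftarrow>xs. p * f x)"
proof -
  define A where "A = set (map fst xs)"
  have filter_sum: "sum_list (map snd (filter (\<lambda>z. fst z = a) ys)) * f a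
      = (\<Sum>(x, p)\<leftarrow>ys. if x = a then p * f x else 0)" for a ys
    by (induction ys) (auto simp: algebra_simps)
  have sum_swap: "(\<Sum>a\<in>A. \<Sum>(x, p)\<leftarrow>ys. g a x p) = (\<Sum>(x, p)\<leftarrow>ys. \<Sum>a\<in>A. g a x p)"
    for ys and g :: "'a \<Rightarrow> 'a \<Rightarrow> real \<Rightarrow> real"
    by (induction ys) (auto simp: sum.distrib)
  have "measure_pmf.expectation (pmf_of_list xs) f = (\<Sum>a\<in>A. pmf (pmf_of_list xs) a * f a)"
    using set_pmf_of_list[OF assms] by (subst integral_measure_pmf[of A]) (auto simp: A_def)
  also have "\<dots> = (\<Sum>(x, p)\<leftarrow>xs. \<Sum>a\<in>A. if x = a then p * f x else 0)"
    by (simp add: pmf_pmf_of_list[OF assms] filter_sum sum_swap)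
  also have "\<dots> = (\<Sum>(x, p)\<leftarrow>xs. p * f x)"
    by (intro arg_cong[where f = sum_list] map_cong) (auto simp: A_def rev_image_eqI)
  finally show ?thesis .
qed

definition degree_seqs :: "nat \<Rightarrow> nat list set" where
  "degree_seqs n = {ds. length ds = n \<and> set ds \<subseteq> {1..n + 1} \<and> sum_list ds = 2 * n}"

lemma finite_degree_seqs: "finite (degree_seqs n)"
  by (rule finite_subset[OF _ finite_lists_length_eq[of "{1..n + 1}" n]])
     (auto simp: degree_seqs_def)

definition attachment_list :: "real \<Rightarrow> nat list \<Rightarrow> (nat list \<times> real) list" where
  "attachment_list \<delta> ds =
     map (\<lambda>i. (ds[i := ds ! i + 1] @ [1], (real (ds ! i) + \<delta>) / ((2 + \<delta>) * real (length ds))))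
         [0..<length ds]"

lemma modelA_step_eq: "modelA_step \<delta> ds = pmf_of_list (attachment_list \<delta> ds)"
  by (simp add: modelA_step_def attachment_list_def)

lemma attachment_list_wf:
  assumes "\<delta> > -1" "ds \<in> degree_seqs n" "n \<ge> 1"
  shows "pmf_of_list_wf (attachment_list \<delta> ds)"
proof (rule pmf_of_list_wfI)
  have len: "length ds = n" and degs: "set ds \<subseteq> {1..n + 1}" and total: "sum_list ds = 2 * n"
    using assms(2) by (auto simp: degree_seqs_def)
  have denom_pos: "(2 + \<delta>) * real n > 0"
    using assms(1,3) by simp
  show "x \<ge> 0" if x_mem: "x \<in> set (map snd (attachment_list \<delta> ds))" for x
  proof -
    obtain i where "i < n" and x: "x = (real (ds ! i) + \<delta>) / ((2 + \<delta>) * real n)"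
      using x_mem by (auto simp: attachment_list_def len)
    then have "ds ! i \<ge> 1"
      using degs len nth_mem by fastforce
    then show ?thesis
      unfolding x using assms(1) denom_pos by (intro divide_nonneg_pos) auto
  qed
  have "(\<Sum>i<n. real (ds ! i) + \<delta>) = (2 + \<delta>) * real n"
    using total len by (simp add: sum.distrib sum_list_sum_nth atLeast0LessThan algebra_simps
                                  flip: of_nat_sum)
  then show "sum_list (map snd (attachment_list \<delta> ds)) = 1"
    using len assms(1,3)
    by (simp add: attachment_list_def interv_sum_list_conv_sum_set_nat atLeast0LessThan
                  flip: sum_divide_distrib)
qed

lemma set_pmf_modelA_step:
  assumes "\<delta> > -1" "ds \<in> degree_seqs n" "n \<ge> 1"
  shows "set_pmf (modelA_step \<delta> ds) \<subseteq> degree_seqs (Suc n)"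
proof
  have len: "length ds = n" and degs: "set ds \<subseteq> {1..n + 1}" and total: "sum_list ds = 2 * n"
    using assms(2) by (auto simp: degree_seqs_def)
  fix ds' assume "ds' \<in> set_pmf (modelA_step \<delta> ds)"
  then have "ds' \<in> fst ` set (attachment_list \<delta> ds)"
    using set_pmf_of_list[OF attachment_list_wf[OF assms]] by (auto simp: modelA_step_eq)
  then obtain i where i: "i < n" and ds': "ds' = ds[i := ds ! i + 1] @ [1]"
    by (auto simp: attachment_list_def len)
  have "ds ! i \<in> {1..n + 1}"
    using i len degs nth_mem by fastforce
  then have "set ds' \<subseteq> {1..Suc n + 1}"
    using degs by (fastforce simp: ds' dest: subsetD[OF set_update_subset_insert])
  moreover have "sum_list ds' = 2 * Suc n"
    using i len total by (simp add: ds' sum_list_update)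
  ultimately show "ds' \<in> degree_seqs (Suc n)"
    using len by (simp add: degree_seqs_def ds')
qed

lemma modelA_Suc:
  assumes "n \<ge> 1"
  shows "modelA \<delta> (Suc n) = modelA \<delta> n \<bind> modelA_step \<delta>"
  using assms by (cases n) (auto simp: modelA_def)

lemma set_pmf_modelA:
  assumes "\<delta> > -1" "n \<ge> 1"
  shows "set_pmf (modelA \<delta> n) \<subseteq> degree_seqs n"
  using assms(2)
proof (induction n rule: dec_induct)
  case base
  then show ?case by (simp add: modelA_def degree_seqs_def)
next
  case (step n)
  then show ?case
    using set_pmf_modelA_step[OF assms(1) _ step(1)] by (auto simp: modelA_Suc)
qed

lemma real_N_gt_eq_sum: "real (N_gt k ds) = (\<Sum>i<length ds. of_bool (k < ds ! i))"
  by (simp add: N_gt_def lessThan_def Collect_conj_eq)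

lemma N_gt_attach:
  assumes "i < length ds" "k \<ge> 1"
  shows "N_gt k (ds[i := ds ! i + 1] @ [1]) = N_gt k ds + of_bool (ds ! i = k)"
proof -
  have "real (N_gt k (ds[i := ds ! i + 1] @ [1]))
      = (\<Sum>j<length ds. of_bool (k < ds ! j) + (if j = i then of_bool (ds ! i = k) else 0))"
    using assms
    by (auto simp: real_N_gt_eq_sum nth_append nth_list_update simp del: sum_of_bool_eq
             intro!: sum.cong)
  also have "\<dots> = real (N_gt k ds + of_bool (ds ! i = k))"
    using assms(1) by (simp add: sum.distrib real_N_gt_eq_sum del: sum_of_bool_eq)
  finally show ?thesis by linarith
qed

lemma N_gt_pred_diff:
  assumes "k \<ge> 1"
  shows "real (N_gt (k - 1) ds) - real (N_gt k ds) = (\<Sum>i<length ds. of_bool (ds ! i = k))"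
  using assms
  by (auto simp: real_N_gt_eq_sum simp del: sum_of_bool_eq simp flip: sum_subtractf
           intro!: sum.cong)

lemma expectation_modelA_step_N_gt:
  assumes "\<delta> > -1" "ds \<in> degree_seqs n" "n \<ge> 1" "k \<ge> 1"
  shows "measure_pmf.expectation (modelA_step \<delta> ds) (\<lambda>ds'. real (N_gt k ds'))
       = real (N_gt k ds)
         + (real k + \<delta>) / ((2 + \<delta>) * real n) * (real (N_gt (k - 1) ds) - real (N_gt k ds))"
proof -
  have len: "length ds = n"
    using assms(2) by (simp add: degree_seqs_def)
  define w where "w i = (real (ds ! i) + \<delta>) / ((2 + \<delta>) * real n)" for i
  define c where "c = (real k + \<delta>) / ((2 + \<delta>) * real n)"
  have w_sum: "(\<Sum>i<n. w i) = 1"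
    using attachment_list_wf[OF assms(1-3)] len
    by (simp add: pmf_of_list_wf_def attachment_list_def interv_sum_list_conv_sum_set_nat
                  atLeast0LessThan w_def)
  have "measure_pmf.expectation (modelA_step \<delta> ds) (\<lambda>ds'. real (N_gt k ds'))
      = (\<Sum>i<n. w i * real (N_gt k (ds[i := ds ! i + 1] @ [1])))"
    unfolding modelA_step_eq expectation_pmf_of_list[OF attachment_list_wf[OF assms(1-3)]]
    using len by (simp add: attachment_list_def interv_sum_list_conv_sum_set_nat atLeast0LessThan w_def)
  also have "\<dots> = (\<Sum>i<n. w i * real (N_gt k ds) + c * of_bool (ds ! i = k))"
  proof (intro sum.cong refl)
    fix i assume "i \<in> {..<n}"
    then have "N_gt k (ds[i := ds ! i + 1] @ [1]) = N_gt k ds + of_bool (ds ! i = k)"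
      using len assms(4) by (intro N_gt_attach) auto
    moreover have "w i = c" if "ds ! i = k"
      using that by (simp add: w_def c_def)
    ultimately show "w i * real (N_gt k (ds[i := ds ! i + 1] @ [1]))
        = w i * real (N_gt k ds) + c * of_bool (ds ! i = k)"
      by (cases "ds ! i = k") (simp_all add: ring_distribs)
  qed
  also have "\<dots> = real (N_gt k ds) * (\<Sum>i<n. w i) + c * (\<Sum>i<n. of_bool (ds ! i = k))"
    by (simp add: sum.distrib sum_distrib_left sum_distrib_right mult.commute
             del: sum_of_bool_eq)
  also have "\<dots> = real (N_gt k ds) + c * (real (N_gt (k - 1) ds) - real (N_gt k ds))"
    using len N_gt_pred_diff[OF assms(4), of ds] by (simp add: w_sum del: sum_of_bool_eq)
  finally show ?thesis
    unfolding c_def .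
qed

lemma expectation_modelA_eq_sum:
  fixes f :: "nat list \<Rightarrow> real"
  assumes "\<delta> > -1" "n \<ge> 1"
  shows "measure_pmf.expectation (modelA \<delta> n) f = (\<Sum>ds\<in>degree_seqs n. pmf (modelA \<delta> n) ds * f ds)"
  using set_pmf_modelA[OF assms] finite_degree_seqs
  by (subst integral_measure_pmf[of "degree_seqs n"]) auto

definition expected_N_gt :: "real \<Rightarrow> nat \<Rightarrow> nat \<Rightarrow> real" where
  "expected_N_gt \<delta> k n = measure_pmf.expectation (modelA \<delta> n) (\<lambda>ds. real (N_gt k ds))"

lemma expected_N_gt_Suc:
  assumes "\<delta> > -1" "n \<ge> 1" "k \<ge> 1"
  shows "expected_N_gt \<delta> k (Suc n)
       = expected_N_gt \<delta> k n
         + (real k + \<delta>) / ((2 + \<delta>) * real n) * (expected_N_gt \<delta> (k - 1) n - expected_N_gt \<delta> k n)"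
proof -
  define c where "c = (real k + \<delta>) / ((2 + \<delta>) * real n)"
  define P where "P = pmf (modelA \<delta> n)"
  have step: "measure_pmf.expectation (modelA_step \<delta> ds) (\<lambda>ds'. real (N_gt k ds'))
      = real (N_gt k ds) + c * (real (N_gt (k - 1) ds) - real (N_gt k ds))"
    if "ds \<in> degree_seqs n" for ds
    using expectation_modelA_step_N_gt[OF assms(1) that assms(2,3)] unfolding c_def .
  have "expected_N_gt \<delta> k (Suc n)
      = (\<Sum>ds\<in>degree_seqs n. P ds * measure_pmf.expectation (modelA_step \<delta> ds) (\<lambda>ds'. real (N_gt k ds')))"
    unfolding expected_N_gt_def modelA_Suc[OF assms(2)] P_def
    using finite_degree_seqs set_pmf_modelA[OF assms(1,2)]
          finite_set_pmf_of_list[OF attachment_list_wf[OF assms(1) _ assms(2)]]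
    by (subst pmf_expectation_bind[of "degree_seqs n"]) (auto simp: modelA_step_eq)
  also have "\<dots> = (\<Sum>ds\<in>degree_seqs n. P ds * real (N_gt k ds)
                    + c * (P ds * real (N_gt (k - 1) ds) - P ds * real (N_gt k ds)))"
    by (intro sum.cong refl) (simp add: step algebra_simps)
  also have "\<dots> = expected_N_gt \<delta> k n + c * (expected_N_gt \<delta> (k - 1) n - expected_N_gt \<delta> k n)"
    by (simp add: expected_N_gt_def expectation_modelA_eq_sum[OF assms(1,2)] P_def
                  sum.distrib sum_subtractf sum_distrib_left right_diff_distrib)
  finally show ?thesis
    unfolding c_def .
qed

lemma expected_N_gt_0:
  assumes "\<delta> > -1" "n \<ge> 1"
  shows "expected_N_gt \<delta> 0 n = real n"
proof -
  have "real (N_gt 0 ds) = real n" if "ds \<in> degree_seqs n" for ds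
  proof -
    have "{i. i < length ds \<and> 0 < ds ! i} = {..<n}"
      using that nth_mem by (fastforce simp: degree_seqs_def)
    then show ?thesis
      by (simp add: N_gt_def)
  qed
  then have "expected_N_gt \<delta> 0 n = real n * (\<Sum>ds\<in>degree_seqs n. pmf (modelA \<delta> n) ds)"
    by (simp add: expected_N_gt_def expectation_modelA_eq_sum[OF assms] sum_distrib_left
                  mult.commute)
  then show ?thesis
    using sum_pmf_eq_1[OF finite_degree_seqs set_pmf_modelA[OF assms]] by simp
qed

lemma expected_N_gt_eq_0_if_ge:
  assumes "\<delta> > -1" "n \<ge> 1" "k \<ge> n + 1"
  shows "expected_N_gt \<delta> k n = 0"
proof -
  have "N_gt k ds = 0" if "ds \<in> degree_seqs n" for ds
    using that assms(3) nth_mem by (fastforce simp: degree_seqs_def N_gt_def)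
  then show ?thesis
    by (simp add: expected_N_gt_def expectation_modelA_eq_sum[OF assms(1,2)])
qed

lemma expected_N_gt_1: "expected_N_gt \<delta> k 1 = of_bool (k < 2)"
proof -
  have "{i. i < 1 \<and> k < [2::nat] ! i} = (if k < 2 then {0} else {})"
    by auto
  then show ?thesis
    by (simp add: expected_N_gt_def modelA_def N_gt_def)
qed

lemma Gamma_plus1_pos: "(x::real) > 0 \<Longrightarrow> Gamma (x + 1) = x * Gamma x"
  by (rule Gamma_plus1) (use nonpos_Ints_nonpos[of x] in force)

lemma p_gt_Suc:
  assumes "\<delta> > -1"
  shows "p_gt \<delta> (Suc j) = (real j + 1 + \<delta>) / (real j + 3 + 2 * \<delta>) * p_gt \<delta> j"
proof -
  have num: "Gamma (real (Suc j) + 1 + \<delta>) = (real j + 1 + \<delta>) * Gamma (real j + 1 + \<delta>)"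
    using Gamma_plus1_pos[of "real j + 1 + \<delta>"] assms by (simp add: algebra_simps)
  have den: "Gamma (real (Suc j) + 3 + 2 * \<delta>) = (real j + 3 + 2 * \<delta>) * Gamma (real j + 3 + 2 * \<delta>)"
    using Gamma_plus1_pos[of "real j + 3 + 2 * \<delta>"] assms by (simp add: algebra_simps)
  have "Gamma (real j + 3 + 2 * \<delta>) > 0" "Gamma (1 + \<delta>) > 0" "real j + 3 + 2 * \<delta> > 0"
    using assms by auto
  then show ?thesis
    unfolding p_gt_def num den by (simp add: field_simps)
qed

lemma p_gt_0:
  assumes "\<delta> > -1"
  shows "p_gt \<delta> 0 = 1"
proof -
  have "Gamma (3 + 2 * \<delta>) > 0" "Gamma (1 + \<delta>) > 0"
    using assms by (auto intro: Gamma_real_pos)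
  then show ?thesis
    by (simp add: p_gt_def add.commute)
qed

lemma p_gt_pos: "\<delta> > -1 \<Longrightarrow> p_gt \<delta> k > 0"
  unfolding p_gt_def by (intro divide_pos_pos mult_pos_pos Gamma_real_pos) auto

lemma p_gt_recurrence:
  assumes "\<delta> > -1" "k \<ge> 1"
  shows "(2 + \<delta>) * p_gt \<delta> k = (real k + \<delta>) * (p_gt \<delta> (k - 1) - p_gt \<delta> k)"
proof -
  obtain j where k: "k = Suc j"
    using assms(2) by (cases k) auto
  have "real j + 3 + 2 * \<delta> > 0"
    using assms(1) by simp
  then show ?thesis
    unfolding k p_gt_Suc[OF assms(1)] by (simp add: field_simps)
qed

lemma p_gt_tail_bound: "\<delta> > -1 \<Longrightarrow> (real k + 1 + \<delta>) * p_gt \<delta> k \<le> 1 + \<delta>"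
proof (induction k)
  case 0
  then show ?case by (simp add: p_gt_0)
next
  case (Suc j)
  have "(real (Suc j) + 1 + \<delta>) * p_gt \<delta> (Suc j)
      = (real j + 2 + \<delta>) / (real j + 3 + 2 * \<delta>) * ((real j + 1 + \<delta>) * p_gt \<delta> j)"
    unfolding p_gt_Suc[OF Suc.prems] by (simp add: algebra_simps)
  also have "\<dots> \<le> 1 * ((real j + 1 + \<delta>) * p_gt \<delta> j)"
    using Suc.prems p_gt_pos[OF Suc.prems, of j]
    by (intro mult_right_mono) (auto simp: divide_le_eq)
  also have "\<dots> \<le> 1 + \<delta>"
    using Suc by simp
  finally show ?case .
qed

lemma p_gt_le_1:
  assumes "\<delta> > -1"
  shows "p_gt \<delta> k \<le> 1"
proof -
  have "(1 + \<delta>) * p_gt \<delta> k \<le> (real k + 1 + \<delta>) * p_gt \<delta> k"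
    using p_gt_pos[OF assms, of k] by (intro mult_right_mono) auto
  also have "\<dots> \<le> (1 + \<delta>) * 1"
    using p_gt_tail_bound[OF assms] by simp
  finally show ?thesis
    using assms by simp
qed

lemma expected_N_gt_error_Suc:
  assumes "\<delta> > -1" "n \<ge> 1" "k \<ge> 1"
  defines "c \<equiv> (real k + \<delta>) / ((2 + \<delta>) * real n)"
  shows "expected_N_gt \<delta> k (Suc n) - real (Suc n) * p_gt \<delta> k
       = (1 - c) * (expected_N_gt \<delta> k n - real n * p_gt \<delta> k)
         + c * (expected_N_gt \<delta> (k - 1) n - real n * p_gt \<delta> (k - 1))"
proof -
  have "c * real n = (real k + \<delta>) / (2 + \<delta>)"
    using assms(1,2) by (simp add: c_def)
  moreover have "p_gt \<delta> k = (real k + \<delta>) / (2 + \<delta>) * (p_gt \<delta> (k - 1) - p_gt \<delta> k)"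
    using p_gt_recurrence[OF assms(1,3)] assms(1) by (simp add: field_simps)
  ultimately have "p_gt \<delta> k = c * real n * (p_gt \<delta> (k - 1) - p_gt \<delta> k)"
    by simp
  then show ?thesis
    unfolding expected_N_gt_Suc[OF assms(1-3), folded c_def] by (simp add: algebra_simps)
qed

lemma large_degree_bounds:
  assumes "\<delta> > -1" "n \<ge> 1" "(2 + \<delta>) * real n < real k + \<delta>"
  shows "k \<ge> n + 2" and "real (Suc n) * p_gt \<delta> k \<le> 2"
proof -
  have "(1 + \<delta>) * (real n - 1) \<ge> 0"
    using assms(1,2) by simp
  then have k_gt: "real k > real n + 1"
    using assms(3) by (simp add: algebra_simps)
  then show "k \<ge> n + 2"
    by linarith
  have "real (Suc n) * ((real k + 1 + \<delta>) * p_gt \<delta> k) \<le> real (Suc n) * (1 + \<delta>)"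
    using p_gt_tail_bound[OF assms(1)] by (intro mult_left_mono) auto
  also have "\<dots> \<le> (real k + 1 + \<delta>) * 2"
    using assms k_gt by (simp add: algebra_simps)
  finally have "(real k + 1 + \<delta>) * (real (Suc n) * p_gt \<delta> k) \<le> (real k + 1 + \<delta>) * 2"
    by (simp only: ac_simps)
  moreover have "real k + 1 + \<delta> > 0"
    using assms(1) by simp
  ultimately show "real (Suc n) * p_gt \<delta> k \<le> 2"
    using mult_le_cancel_left_pos by blast
qed

lemma expected_N_gt_error_le_2:
  assumes "\<delta> > -1" "n \<ge> 1"
  shows "\<bar>expected_N_gt \<delta> k n - real n * p_gt \<delta> k\<bar> \<le> 2"
  using assms(2)
proof (induction n arbitrary: k rule: dec_induct)
  case base
  have "0 \<le> expected_N_gt \<delta> k 1" "expected_N_gt \<delta> k 1 \<le> 1"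
    unfolding expected_N_gt_1 by simp_all
  then show ?case
    using p_gt_pos[OF assms(1), of k] p_gt_le_1[OF assms(1), of k] by linarith
next
  case (step n)
  consider "k = 0" | "k \<ge> 1" "(2 + \<delta>) * real n < real k + \<delta>"
    | "k \<ge> 1" "real k + \<delta> \<le> (2 + \<delta>) * real n"
    by linarith
  then show ?case
  proof cases
    case 1
    then show ?thesis
      using step(1) by (simp add: expected_N_gt_0[OF assms(1)] p_gt_0[OF assms(1)])
  next
    case 2
    then show ?thesis
      using large_degree_bounds[OF assms(1) step(1)] p_gt_pos[OF assms(1), of k]
      by (simp add: expected_N_gt_eq_0_if_ge[OF assms(1)])
  next
    case 3
    define c where "c = (real k + \<delta>) / ((2 + \<delta>) * real n)"
    define e where "e j = expected_N_gt \<delta> j n - real n * p_gt \<delta> j" for j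
    have "0 \<le> c" "c \<le> 1"
      using assms(1) step(1) 3 by (auto simp: c_def divide_le_eq_1)
    then have "\<bar>(1 - c) * e k + c * e (k - 1)\<bar> \<le> (1 - c) * \<bar>e k\<bar> + c * \<bar>e (k - 1)\<bar>"
      using abs_triangle_ineq[of "(1 - c) * e k" "c * e (k - 1)"] by (simp add: abs_mult)
    also have "\<dots> \<le> 2"
      using \<open>0 \<le> c\<close> \<open>c \<le> 1\<close> step.IH by (intro convex_bound_le) (auto simp: e_def)
    finally show ?thesis
      unfolding expected_N_gt_error_Suc[OF assms(1) step(1) 3(1), folded c_def] e_def .
  qed
qed

theorem mainTheorem7:
  fixes \<delta> :: real
  assumes "\<delta> > -1"
  shows "\<exists>C'>0. \<forall>n\<ge>1. \<forall>k\<ge>1.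
           \<bar>measure_pmf.expectation (modelA \<delta> n) (\<lambda>ds. real (N_gt k ds)) - real n * p_gt \<delta> k\<bar> \<le> C'"
  using expected_N_gt_error_le_2[OF assms] unfolding expected_N_gt_def
  by (intro exI[of _ 2]) auto

end
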